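(* Let $P$ be a finite semipure poset of length $n$ having both a unique minimum element $\hat 0$ and a unique maximum element, $t\ge1$, $\lambda_P:\mathrm{Cov}(\hat P)\to L_P$ an EL-labeling, and $\lambda$ the induced EL-labeling of $\widehat{P*T_{t,n}}$, restricted to the interval $(P*T_{t,n})^+=[(\hat 0,\hat 0_T),\hat 1]$. Then the number of ascent free maximal chains of $(P*T_{t,n})^+$ equals $$\sum_{\substack{w\in\mathrm{NDA}_n(L_P)\\ w_{n-1}\not\le w_n}} c(w)\,t^{\mathrm{asc}(w)+1}(1+t)^{n-1-2\,\mathrm{asc}(w)},$$ where $c(w)$ is the number of maximal chains of $P$ whose label sequence under $\lambda_P$ (restricted to $\mathrm{Cov}(P)$) is $w$.
   Context: Rees product $P*Q$ of semipure posets (rank $r_P(x)$ = common length of maximal chains of $P_{\le x}$): the set $\{(p,q): r_P(p)\ge r_Q(q)\}$ with $(p_1,q_1)\le(p_2,q_2)$ iff $p_1\le p_2$, $q_1\le q_2$, $r_P(p_2)-r_P(p_1)\ge r_Q(q_2)-r_Q(q_1)$. $T_{t,n}$: sequences over $\{1,\dots,t\}$ of length $\le n$ ordered by prefix, minimum $\hat 0_T$, rank = length. $\hat Q$: $Q$ with a new minimum and new maximum adjoined (even if $Q$ already has them); for $\hat P$ these are $\hat 0_P,\hat 1_P$. $Q^+$ denotes $Q$ with a new maximum adjoined; $(P*T_{t,n})^+$ is identified with the interval $[(\hat 0,\hat 0_T),\hat 1]$ of $\widehat{P*T_{t,n}}$. An edge labeling $\lambda:\mathrm{Cov}(Q)\to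 L$ of a bounded poset is an EL-labeling if each interval $[x,y]$ has a unique maximal chain with weakly increasing labels and its label sequence lexicographically precedes those of all other maximal chains of $[x,y]$. The induced labeling $\lambda$ of $\widehat{P*T_{t,n}}$ takes values in $L_P\times\{0<1\}$ (product order): the minimum is identified with $(\hat 0_P,\hat 0_T)$; for a cover $(x,k)\lessdot(y,l)$ with $(y,l)\ne\hat 1$, $\lambda=(\lambda_P(x,y),1)$ if $k<l$ and $(\lambda_P(x,y),0)$ if $k=l$; for $(x,k)\lessdot\hat 1$, $\lambda=(\lambda_P(x,\hat 1_P),0)$. A maximal chain is ascent free if no two consecutive labels $a,b$ satisfy $a\le b$. For a word $w$ of length $N$ over a poset $A$: $i\in[N-1]$ is an ascent if $w_i\le w_{i+1}$; $\mathrm{asc}(w)$ counts ascents; a double ascent is $i\in[N-2]$ with $w_i\le w_{i+1}\le w_{i+2}$; $\mathrm{NDA}_N(A)$ is the set of length-$N$ words over $A$ without double ascents. *)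

theory Defs
  imports Main "HOL-Library.Sublist"
begin

definition po_on :: "'a set \<Rightarrow> ('a \<Rightarrow> 'a \<Rightarrow> bool) \<Rightarrow> bool" where
  "po_on S le \<longleftrightarrow> (\<forall>x\<in>S. le x x) \<and> (\<forall>x\<in>S. \<forall>y\<in>S. le x y \<and> le y x \<longrightarrow> x = y)
     \<and> (\<forall>x\<in>S. \<forall>y\<in>S. \<forall>z\<in>S. le x y \<and> le y z \<longrightarrow> le x z)"

definition covers :: "'a set \<Rightarrow> ('a \<Rightarrow> 'a \<Rightarrow> bool) \<Rightarrow> 'a \<Rightarrow> 'a \<Rightarrow> bool" where
  "covers S le x y \<longleftrightarrow> x \<in> S \<and> y \<in> S \<and> le x y \<and> x \<noteq> y
     \<and> \<not> (\<exists>z\<in>S. le x z \<and> le z y \<and> z \<noteq> x \<and> z \<noteq> y)"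

definition cover_chain :: "'a set \<Rightarrow> ('a \<Rightarrow> 'a \<Rightarrow> bool) \<Rightarrow> 'a list \<Rightarrow> bool" where
  "cover_chain S le c \<longleftrightarrow> c \<noteq> [] \<and> set c \<subseteq> S
     \<and> (\<forall>i. Suc i < length c \<longrightarrow> covers S le (c ! i) (c ! Suc i))"

definition mchains :: "'a set \<Rightarrow> ('a \<Rightarrow> 'a \<Rightarrow> bool) \<Rightarrow> 'a \<Rightarrow> 'a \<Rightarrow> 'a list set" where
  "mchains S le x y = {c. cover_chain S le c \<and> hd c = x \<and> last c = y}"

definition pminimal :: "'a set \<Rightarrow> ('a \<Rightarrow> 'a \<Rightarrow> bool) \<Rightarrow> 'a \<Rightarrow> bool" where
  "pminimal S le x \<longleftrightarrow> x \<in> S \<and> (\<forall>y\<in>S. le y x \<longrightarrow> y = x)"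

definition pmaximal :: "'a set \<Rightarrow> ('a \<Rightarrow> 'a \<Rightarrow> bool) \<Rightarrow> 'a \<Rightarrow> bool" where
  "pmaximal S le x \<longleftrightarrow> x \<in> S \<and> (\<forall>y\<in>S. le x y \<longrightarrow> y = x)"

definition maxchains :: "'a set \<Rightarrow> ('a \<Rightarrow> 'a \<Rightarrow> bool) \<Rightarrow> 'a list set" where
  "maxchains S le = {c. cover_chain S le c \<and> pminimal S le (hd c) \<and> pmaximal S le (last c)}"

definition downset :: "'a set \<Rightarrow> ('a \<Rightarrow> 'a \<Rightarrow> bool) \<Rightarrow> 'a \<Rightarrow> 'a set" where
  "downset S le x = {y \<in> S. le y x}"

definition semipure :: "'a set \<Rightarrow> ('a \<Rightarrow> 'a \<Rightarrow> bool) \<Rightarrow> bool" where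
  "semipure S le \<longleftrightarrow> (\<forall>x\<in>S. \<forall>c\<in>maxchains (downset S le x) le.
       \<forall>c'\<in>maxchains (downset S le x) le. length c = length c')"

definition prank :: "'a set \<Rightarrow> ('a \<Rightarrow> 'a \<Rightarrow> bool) \<Rightarrow> 'a \<Rightarrow> nat" where
  "prank S le x = length (SOME c. c \<in> maxchains (downset S le x) le) - 1"

definition is_chain :: "'a set \<Rightarrow> ('a \<Rightarrow> 'a \<Rightarrow> bool) \<Rightarrow> 'a list \<Rightarrow> bool" where
  "is_chain S le c \<longleftrightarrow> set c \<subseteq> S
     \<and> (\<forall>i. Suc i < length c \<longrightarrow> le (c ! i) (c ! Suc i) \<and> c ! i \<noteq> c ! Suc i)"

definition poset_length :: "'a set \<Rightarrow> ('a \<Rightarrow> 'a \<Rightarrow> bool) \<Rightarrow> nat" where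
  "poset_length S le = Max {length c - 1 | c. c \<noteq> [] \<and> is_chain S le c}"

datatype 'a ext = Bot | El 'a | Top

fun ext_le :: "('a \<Rightarrow> 'a \<Rightarrow> bool) \<Rightarrow> 'a ext \<Rightarrow> 'a ext \<Rightarrow> bool" where
  "ext_le le Bot _ = True"
| "ext_le le _ Top = True"
| "ext_le le (El x) (El y) = le x y"
| "ext_le le _ _ = False"

definition hat_set :: "'a set \<Rightarrow> 'a ext set" where
  "hat_set S = {Bot, Top} \<union> El ` S"

definition plus_set :: "'a set \<Rightarrow> 'a ext set" where
  "plus_set S = El ` S \<union> {Top}"

definition labels :: "('a \<Rightarrow> 'a \<Rightarrow> 'l) \<Rightarrow> 'a list \<Rightarrow> 'l list" where
  "labels lam c = map (\<lambda>i. lam (c ! i) (c ! Suc i)) [0..<length c - 1]"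

definition weakly_inc :: "('l \<Rightarrow> 'l \<Rightarrow> bool) \<Rightarrow> 'l list \<Rightarrow> bool" where
  "weakly_inc lle ls \<longleftrightarrow> (\<forall>i. Suc i < length ls \<longrightarrow> lle (ls ! i) (ls ! Suc i))"

definition lex_prec :: "('l \<Rightarrow> 'l \<Rightarrow> bool) \<Rightarrow> 'l list \<Rightarrow> 'l list \<Rightarrow> bool" where
  "lex_prec lle xs ys \<longleftrightarrow> (\<exists>i. i < length xs \<and> i < length ys \<and> take i xs = take i ys
       \<and> lle (xs ! i) (ys ! i) \<and> xs ! i \<noteq> ys ! i)"

definition EL_labeling :: "'a set \<Rightarrow> ('a \<Rightarrow> 'a \<Rightarrow> bool) \<Rightarrow> 'l set \<Rightarrow> ('l \<Rightarrow> 'l \<Rightarrow> bool)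
    \<Rightarrow> ('a \<Rightarrow> 'a \<Rightarrow> 'l) \<Rightarrow> bool" where
  "EL_labeling Q le L lle lam \<longleftrightarrow>
     (\<forall>x y. covers Q le x y \<longrightarrow> lam x y \<in> L) \<and>
     (\<forall>x\<in>Q. \<forall>y\<in>Q. le x y \<longrightarrow>
        (\<exists>!c. c \<in> mchains Q le x y \<and> weakly_inc lle (labels lam c)) \<and>
        (\<forall>c\<in>mchains Q le x y. weakly_inc lle (labels lam c) \<longrightarrow>
           (\<forall>c'\<in>mchains Q le x y. c' \<noteq> c \<longrightarrow> lex_prec lle (labels lam c) (labels lam c'))))"

definition tset :: "nat \<Rightarrow> nat \<Rightarrow> nat list set" where
  "tset t n = {s. set s \<subseteq> {1..t} \<and> length s \<le> n}"

definition rees_set :: "'a set \<Rightarrow> ('a \<Rightarrow> nat) \<Rightarrow> 'b set \<Rightarrow> ('b \<Rightarrow> nat) \<Rightarrow> ('a \<times> 'b) set" where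
  "rees_set S rS Q rQ = {(p, q). p \<in> S \<and> q \<in> Q \<and> rS p \<ge> rQ q}"

definition rees_le :: "('a \<Rightarrow> 'a \<Rightarrow> bool) \<Rightarrow> ('a \<Rightarrow> nat) \<Rightarrow> ('b \<Rightarrow> 'b \<Rightarrow> bool) \<Rightarrow> ('b \<Rightarrow> nat)
    \<Rightarrow> 'a \<times> 'b \<Rightarrow> 'a \<times> 'b \<Rightarrow> bool" where
  "rees_le leS rS leQ rQ pq1 pq2 \<longleftrightarrow>
     leS (fst pq1) (fst pq2) \<and> leQ (snd pq1) (snd pq2) \<and>
     int (rS (fst pq2)) - int (rS (fst pq1)) \<ge> int (rQ (snd pq2)) - int (rQ (snd pq1))"

fun ind_lab :: "('a ext \<Rightarrow> 'a ext \<Rightarrow> 'l) \<Rightarrow> ('a \<times> nat list) ext \<Rightarrow> ('a \<times> nat list) ext \<Rightarrow> 'l \<times> nat" where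
  "ind_lab lamP (El (x, k)) (El (y, l)) = (lamP (El x) (El y), if strict_prefix k l then 1 else 0)"
| "ind_lab lamP (El (x, k)) Top = (lamP (El x) Top, 0)"
| "ind_lab lamP _ _ = undefined"

definition prod_le :: "('l \<Rightarrow> 'l \<Rightarrow> bool) \<Rightarrow> 'l \<times> nat \<Rightarrow> 'l \<times> nat \<Rightarrow> bool" where
  "prod_le lle a b \<longleftrightarrow> lle (fst a) (fst b) \<and> snd a \<le> snd b"

definition ascent_free :: "('l \<Rightarrow> 'l \<Rightarrow> bool) \<Rightarrow> 'l list \<Rightarrow> bool" where
  "ascent_free lle ls \<longleftrightarrow> (\<forall>i. Suc i < length ls \<longrightarrow> \<not> lle (ls ! i) (ls ! Suc i))"

definition NDA :: "nat \<Rightarrow> 'l set \<Rightarrow> ('l \<Rightarrow> 'l \<Rightarrow> bool) \<Rightarrow> 'l list set" where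
  "NDA n L lle = {w. length w = n \<and> set w \<subseteq> L \<and>
     (\<forall>i. i + 2 < n \<longrightarrow> \<not> (lle (w ! i) (w ! (i + 1)) \<and> lle (w ! (i + 1)) (w ! (i + 2))))}"

definition asc :: "('l \<Rightarrow> 'l \<Rightarrow> bool) \<Rightarrow> 'l list \<Rightarrow> nat" where
  "asc lle w = card {i. Suc i < length w \<and> lle (w ! i) (w ! Suc i)}"

definition chain_count :: "'a set \<Rightarrow> ('a \<Rightarrow> 'a \<Rightarrow> bool) \<Rightarrow> ('a ext \<Rightarrow> 'a ext \<Rightarrow> 'l) \<Rightarrow> 'l list \<Rightarrow> nat" where
  "chain_count S le lamP w = card {c \<in> maxchains S le. labels (\<lambda>x y. lamP (El x) (El y)) c = w}"

end

theory Submission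
  imports Defs
begin

text \<open>
  Let \<open>P\<close> be bounded, semipure of rank \<open>n\<close>, and let \<open>M\<close> be its set of maximal chains.
  A maximal chain of \<open>(P * T\<^sub>t\<^sub>,\<^sub>n)\<^sup>+\<close> is determined by a maximal chain \<open>d \<in> M\<close>
  together with a word \<open>z \<in> {0..t}\<^sup>n\<close>: at step \<open>i\<close> the \<open>P\<close>-coordinate moves from
  \<open>d\<^sub>i\<close> to \<open>d\<^sub>i\<^sub>+\<^sub>1\<close> and the tree coordinate either stays (\<open>z\<^sub>i = 0\<close>) or is
  extended by the letter \<open>z\<^sub>i\<close>; the final step goes to \<open>\<hat>1\<close>.  This gives a
  bijection \<open>M \<times> {0..t}\<^sup>n \<cong> maximal chains\<close> (the map \<open>lift\<close> below).

  Under this bijection the induced label sequence is \<open>(w\<^sub>i, [z\<^sub>i \<noteq> 0])\<^sub>i\<close> followed by a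
  final label whose first component lies above \<open>w\<^sub>n\<close> (a property of EL-labelings of
  \<open>\<hat>P\<close>), where \<open>w\<close> is the label word of \<open>d\<close>.
  Hence the chain is ascent free iff for every ascent \<open>i\<close> of \<open>w\<close> we have \<open>z\<^sub>i \<noteq> 0\<close>
  and \<open>z\<^sub>i\<^sub>+\<^sub>1 = 0\<close>, and \<open>z\<^sub>n \<noteq> 0\<close>.  Counting such \<open>z\<close> for a fixed ascent pattern is
  a purely combinatorial problem on Boolean words, solved by induction: the count
  is \<open>t\<^bsup>asc+1\<^esup>(1+t)\<^bsup>n-1-2asc\<^esup>\<close> if \<open>w\<close> has no double ascent and no ascent at the end,
  and \<open>0\<close> otherwise.  Summing over \<open>M\<close>, grouped by label words, gives the theorem.
\<close>

lemma cover_chain_Nil [simp]: "\<not> cover_chain S le []"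
  by (simp add: cover_chain_def)

lemma cover_chain_single [simp]: "cover_chain S le [x] \<longleftrightarrow> x \<in> S"
  by (auto simp: cover_chain_def)

lemma covers_in: "covers S le x y \<Longrightarrow> x \<in> S \<and> y \<in> S"
  by (simp add: covers_def)

lemma cover_chain_set: "cover_chain S le c \<Longrightarrow> set c \<subseteq> S"
  by (simp add: cover_chain_def)

lemma cover_chain_Cons2 [simp]:
  "cover_chain S le (x # y # c) \<longleftrightarrow> covers S le x y \<and> cover_chain S le (y # c)"
proof
  assume a: "cover_chain S le (x # y # c)"
  have "covers S le ((x # y # c) ! 0) ((x # y # c) ! Suc 0)"
    using a unfolding cover_chain_def by (metis length_Cons zero_less_Suc Suc_mono)
  moreover have "cover_chain S le (y # c)" unfolding cover_chain_def
  proof (intro conjI allI impI)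
    show "set (y # c) \<subseteq> S" using a unfolding cover_chain_def by simp
    fix i assume "Suc i < length (y # c)"
    then have "covers S le ((x # y # c) ! Suc i) ((x # y # c) ! Suc (Suc i))"
      using a unfolding cover_chain_def by (metis Suc_less_eq length_Cons)
    then show "covers S le ((y # c) ! i) ((y # c) ! Suc i)" by simp
  qed simp
  ultimately show "covers S le x y \<and> cover_chain S le (y # c)" by simp
next
  assume a: "covers S le x y \<and> cover_chain S le (y # c)"
  show "cover_chain S le (x # y # c)" unfolding cover_chain_def
  proof (intro conjI allI impI)
    show "set (x # y # c) \<subseteq> S" using a covers_in unfolding cover_chain_def by fastforce
    fix i assume "Suc i < length (x # y # c)"
    then show "covers S le ((x # y # c) ! i) ((x # y # c) ! Suc i)"
      using a unfolding cover_chain_def by (cases i) auto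
  qed simp
qed

lemma cover_chain_append:
  "cover_chain S le c1 \<Longrightarrow> cover_chain S le c2 \<Longrightarrow> last c1 = hd c2 \<Longrightarrow> cover_chain S le (c1 @ tl c2)"
proof (induction c1 rule: induct_list012)
  case (2 x) then show ?case by (cases c2) auto
qed auto

lemma cover_chain_take: "cover_chain S le c \<Longrightarrow> i < length c \<Longrightarrow> cover_chain S le (take (Suc i) c)"
  unfolding cover_chain_def by (auto dest: in_set_takeD)

lemma covers_subset: "covers S le u v \<Longrightarrow> S' \<subseteq> S \<Longrightarrow> u \<in> S' \<Longrightarrow> v \<in> S' \<Longrightarrow> covers S' le u v"
  unfolding covers_def by blast

lemma labels_length [simp]: "length (labels lam c) = length c - 1"
  by (simp add: labels_def)

lemma labels_nth: "i < length c - 1 \<Longrightarrow> labels lam c ! i = lam (c ! i) (c ! Suc i)"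
  by (simp add: labels_def)

locale finite_poset =
  fixes P :: "'a set" and le :: "'a \<Rightarrow> 'a \<Rightarrow> bool"
  assumes finite_P: "finite P" and po: "po_on P le"
begin

lemma refl: "x \<in> P \<Longrightarrow> le x x"
  using po unfolding po_on_def by blast

lemma antisym: "x \<in> P \<Longrightarrow> y \<in> P \<Longrightarrow> le x y \<Longrightarrow> le y x \<Longrightarrow> x = y"
  using po unfolding po_on_def by blast

lemma trans: "x \<in> P \<Longrightarrow> y \<in> P \<Longrightarrow> z \<in> P \<Longrightarrow> le x y \<Longrightarrow> le y z \<Longrightarrow> le x z"
  using po unfolding po_on_def by blast

lemma cover_chain_le_last: "cover_chain P le c \<Longrightarrow> x \<in> set c \<Longrightarrow> le x (last c)"
proof (induction c arbitrary: x rule: induct_list012)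
  case (2 y) then show ?case by (simp add: refl)
next
  case (3 a b zs)
  have ab: "covers P le a b" and chain: "cover_chain P le (b # zs)" using "3.prems"(1) by auto
  have b_last: "le b (last (b # zs))" using "3.IH"(2)[OF chain] by simp
  have last_in: "last (b # zs) \<in> P" using cover_chain_set[OF chain] last_in_set by blast
  have "le a (last (b # zs))"
    using trans[OF _ _ last_in _ b_last] ab unfolding covers_def by blast
  then show ?case using "3.IH"(2)[OF chain] "3.prems"(2) by auto
qed auto

lemma interval_psubset:
  assumes "x \<in> P" "y \<in> P" "z \<in> P" "le x z" "le z y"
  shows "z \<noteq> y \<Longrightarrow> {w\<in>P. le x w \<and> le w z} \<subset> {w\<in>P. le x w \<and> le w y}"
    and "z \<noteq> x \<Longrightarrow> {w\<in>P. le z w \<and> le w y} \<subset> {w\<in>P. le x w \<and> le w y}"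
proof -
  have "{w\<in>P. le x w \<and> le w z} \<subseteq> {w\<in>P. le x w \<and> le w y}"
    "{w\<in>P. le z w \<and> le w y} \<subseteq> {w\<in>P. le x w \<and> le w y}"
    using assms trans by blast+
  moreover have "y \<in> {w\<in>P. le x w \<and> le w y}" "x \<in> {w\<in>P. le x w \<and> le w y}"
    using assms refl trans by blast+
  moreover have "y \<notin> {w\<in>P. le x w \<and> le w z}" if "z \<noteq> y" using that assms antisym by blast
  moreover have "x \<notin> {w\<in>P. le z w \<and> le w y}" if "z \<noteq> x" using that assms antisym by blast
  ultimately show "z \<noteq> y \<Longrightarrow> {w\<in>P. le x w \<and> le w z} \<subset> {w\<in>P. le x w \<and> le w y}"
    and "z \<noteq> x \<Longrightarrow> {w\<in>P. le z w \<and> le w y} \<subset> {w\<in>P. le x w \<and> le w y}"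
    by blast+
qed

text \<open>In a finite poset every interval \<open>[x,y]\<close> has a saturated chain from \<open>x\<close> to \<open>y\<close>:
  refine a non-cover by an intermediate element and recurse on smaller intervals.\<close>
lemma ex_cover_chain:
  "x \<in> P \<Longrightarrow> y \<in> P \<Longrightarrow> le x y \<Longrightarrow> \<exists>c. cover_chain P le c \<and> hd c = x \<and> last c = y"
proof (induction "card {w\<in>P. le x w \<and> le w y}" arbitrary: x y rule: less_induct)
  case less
  show ?case
  proof (cases "x = y \<or> covers P le x y")
    case True then show ?thesis
      using less by (auto intro: exI[of _ "[x]"] exI[of _ "[x, y]"] simp: covers_def)
  next
    case False
    then obtain z where z: "z \<in> P" "le x z" "le z y" "z \<noteq> x" "z \<noteq> y"
      using less unfolding covers_def by blast
    have fin: "finite {w\<in>P. le x w \<and> le w y}" using finite_P by simp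
    obtain c1 where c1: "cover_chain P le c1" "hd c1 = x" "last c1 = z"
      using less(1)[of x z] less(2) z interval_psubset[OF less.prems(1,2) z(1-3)] psubset_card_mono[OF fin]
      by blast
    obtain c2 where c2: "cover_chain P le c2" "hd c2 = z" "last c2 = y"
      using less(1)[of z y] less(3) z interval_psubset[OF less.prems(1,2) z(1-3)] psubset_card_mono[OF fin]
      by blast
    have ne: "c1 \<noteq> []" "c2 \<noteq> []" using c1 c2 by auto
    have "tl c2 \<noteq> []" using c2 z by (cases c2) auto
    then have "last (c1 @ tl c2) = y" using c2 ne by (simp add: last_tl)
    then show ?thesis
      using cover_chain_append[OF c1(1) c2(1)] c1 c2 ne by (intro exI[of _ "c1 @ tl c2"]) simp
  qed
qed

end

section \<open>Bounded semipure posets and their rank function\<close>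

locale bounded_semipure = finite_poset +
  fixes bot top :: 'a
  assumes semipure: "semipure P le"
    and bot_in: "bot \<in> P" and bot_le: "\<forall>y\<in>P. le bot y"
    and top_in: "top \<in> P" and le_top: "\<forall>y\<in>P. le y top"
begin

abbreviation rk :: "'a \<Rightarrow> nat" where "rk \<equiv> prank P le"

text \<open>The rank of the end point of a saturated chain from \<open>bot\<close> is its number of covers:
  the chain is a maximal chain of the down-set, and semipurity fixes their length.\<close>
lemma rank_last:
  assumes "cover_chain P le c" "hd c = bot"
  shows "rk (last c) = length c - 1"
proof -
  let ?D = "downset P le (last c)"
  have ne: "c \<noteq> []" using assms by auto
  have xP: "last c \<in> P" using cover_chain_set[OF assms(1)] last_in_set[OF ne] by blast
  have sub: "set c \<subseteq> ?D"
    using assms cover_chain_set cover_chain_le_last unfolding downset_def by blast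
  have dsub: "?D \<subseteq> P" unfolding downset_def by auto
  have "cover_chain ?D le c"
    unfolding cover_chain_def using ne sub assms(1) covers_subset[OF _ dsub] unfolding cover_chain_def
    by (metis Suc_lessD nth_mem subset_code(1))
  moreover have "pminimal ?D le (hd c)"
    using assms bot_in bot_le antisym xP unfolding pminimal_def downset_def by auto
  moreover have "pmaximal ?D le (last c)"
    using xP refl antisym unfolding pmaximal_def downset_def by auto
  ultimately have cm: "c \<in> maxchains ?D le" unfolding maxchains_def by simp
  then have "(SOME c. c \<in> maxchains ?D le) \<in> maxchains ?D le" by (rule someI)
  then have "length (SOME c. c \<in> maxchains ?D le) = length c"
    using semipure xP cm unfolding semipure_def by blast
  then show ?thesis unfolding prank_def by simp
qed

lemma rank_chain:
  assumes "x \<in> P"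
  obtains c where "cover_chain P le c" "hd c = bot" "last c = x" "rk x = length c - 1"
  using ex_cover_chain[OF bot_in assms] bot_le assms rank_last by blast

lemma rank_cover: assumes "covers P le x y" shows "rk y = Suc (rk x)"
proof -
  obtain c where c: "cover_chain P le c" "hd c = bot" "last c = x" "rk x = length c - 1"
    using rank_chain covers_in[OF assms] by blast
  have "cover_chain P le (c @ [y])"
    using cover_chain_append[OF c(1), of "[x, y]"] c assms covers_in[OF assms] by simp
  then have "rk (last (c @ [y])) = length (c @ [y]) - 1"
    using rank_last[of "c @ [y]"] c by (cases c) auto
  then show ?thesis using c by (cases c) auto
qed

lemma rank_less: assumes "x \<in> P" "y \<in> P" "le x y" "x \<noteq> y" shows "rk x < rk y"
proof -
  obtain c where c: "cover_chain P le c" "hd c = bot" "last c = x" "rk x = length c - 1"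
    using rank_chain assms by blast
  obtain c2 where c2: "cover_chain P le c2" "hd c2 = x" "last c2 = y"
    using ex_cover_chain assms by blast
  have ne: "c \<noteq> []" "c2 \<noteq> []" using c c2 by auto
  have tl: "tl c2 \<noteq> []" using c2 assms(4) by (cases c2) auto
  then have "last (c @ tl c2) = y" using c2 ne by (simp add: last_tl)
  moreover have "cover_chain P le (c @ tl c2)" using cover_chain_append[OF c(1) c2(1)] c c2 by simp
  ultimately have "rk y = length (c @ tl c2) - 1" using rank_last[of "c @ tl c2"] c ne by simp
  moreover have "length c2 \<ge> 2" using tl ne by (cases c2) (auto simp: Suc_le_eq)
  moreover have "length c \<ge> 1" using ne by (cases c) auto
  ultimately show ?thesis using c(4) ne by simp
qed

lemma rank_le: "x \<in> P \<Longrightarrow> y \<in> P \<Longrightarrow> le x y \<Longrightarrow> rk x \<le> rk y"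
  using rank_less by fastforce

lemma maxchains_iff: "d \<in> maxchains P le \<longleftrightarrow> cover_chain P le d \<and> hd d = bot \<and> last d = top"
proof
  assume "d \<in> maxchains P le"
  then show "cover_chain P le d \<and> hd d = bot \<and> last d = top"
    unfolding maxchains_def pminimal_def pmaximal_def using bot_in bot_le top_in le_top by auto
next
  assume "cover_chain P le d \<and> hd d = bot \<and> last d = top"
  then show "d \<in> maxchains P le"
    unfolding maxchains_def pminimal_def pmaximal_def using bot_in bot_le top_in le_top antisym by auto
qed

lemma maxchain_length: "d \<in> maxchains P le \<Longrightarrow> length d = Suc (rk top)"
  using rank_last[of d] maxchains_iff by (cases d) auto

lemma maxchain_rank: assumes "d \<in> maxchains P le" "i < length d" shows "rk (d ! i) = i"
proof -
  have "cover_chain P le (take (Suc i) d)" using assms cover_chain_take maxchains_iff by blast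
  moreover have "hd (take (Suc i) d) = bot" using assms maxchains_iff by (cases d) auto
  ultimately have "rk (last (take (Suc i) d)) = length (take (Suc i) d) - 1" by (rule rank_last)
  moreover have "last (take (Suc i) d) = d ! i"
    using assms by (simp add: take_Suc_conv_app_nth)
  ultimately show ?thesis using assms by simp
qed

text \<open>Every chain of \<open>P\<close> has at most \<open>rk top\<close> steps, as the rank strictly increases along it.\<close>
lemma chain_length_bound:
  assumes "is_chain P le c" "c \<noteq> []"
  shows "length c - 1 \<le> rk top"
proof -
  have inP: "set c \<subseteq> P" using assms unfolding is_chain_def by auto
  have "i \<le> rk (c ! i)" if "i < length c" for i
    using that
  proof (induction i)
    case (Suc i)
    have "le (c ! i) (c ! Suc i)" "c ! i \<noteq> c ! Suc i" using assms Suc unfolding is_chain_def by auto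
    moreover have "c ! i \<in> P" "c ! Suc i \<in> P" using inP Suc.prems nth_mem Suc_lessD by blast+
    ultimately have "rk (c ! i) < rk (c ! Suc i)" using rank_less by blast
    then show ?case using Suc by simp
  qed simp
  then have "length c - 1 \<le> rk (c ! (length c - 1))" using assms by simp
  moreover have "rk (c ! (length c - 1)) \<le> rk top" using rank_le inP top_in le_top assms
    by (metis diff_less length_greater_0_conv less_one nth_mem subsetD)
  ultimately show ?thesis by simp
qed

lemma poset_length_eq: "poset_length P le = rk top"
proof -
  let ?S = "{length c - 1 | c. c \<noteq> [] \<and> is_chain P le c}"
  have bounded: "?S \<subseteq> {..rk top}" using chain_length_bound by auto
  obtain c where c: "cover_chain P le c" "hd c = bot" "last c = top"
    using ex_cover_chain bot_in top_in bot_le by blast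
  have "is_chain P le c" using c unfolding cover_chain_def is_chain_def covers_def by auto
  moreover have "rk top = length c - 1" using rank_last c by force
  ultimately have "rk top \<in> ?S" using c by auto
  have "finite ?S" using bounded finite_subset by blast
  moreover have "\<And>y. y \<in> ?S \<Longrightarrow> y \<le> rk top" using bounded by auto
  ultimately show ?thesis unfolding poset_length_def
    using Max_eqI \<open>rk top \<in> ?S\<close> by blast
qed

end

section \<open>The cover relation of \<open>(P * T\<^sub>t\<^sub>,\<^sub>n)\<^sup>+\<close>\<close>

lemma prefix_length_eq: "prefix a b \<Longrightarrow> length b \<le> length a \<Longrightarrow> a = b"
  by (auto simp: prefix_def)

lemma ext_le_Top_iff [simp]: "ext_le R Top v \<longleftrightarrow> v = Top"
  by (cases v) auto

locale rees_tree = bounded_semipure +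
  fixes t n :: nat
  assumes rank_top: "prank P le top = n"
begin

abbreviation "PT \<equiv> rees_set P rk (tset t n) length"
abbreviation "PT_le \<equiv> rees_le le rk prefix length"
abbreviation "PTp \<equiv> plus_set PT"
abbreviation "PTp_le \<equiv> ext_le PT_le"

lemma mem_PT: "(x, k) \<in> PT \<longleftrightarrow> x \<in> P \<and> set k \<subseteq> {1..t} \<and> length k \<le> n \<and> length k \<le> rk x"
  by (auto simp: rees_set_def tset_def)

lemma PT_le_iff:
  "PT_le (x, k) (y, l) \<longleftrightarrow> le x y \<and> prefix k l \<and> int (length l) - int (length k) \<le> int (rk y) - int (rk x)"
  by (simp add: rees_le_def)

lemma mem_PTp: "v \<in> PTp \<longleftrightarrow> v = Top \<or> (\<exists>p\<in>PT. v = El p)"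
  by (auto simp: plus_set_def)

lemma no_cover_from_Top: "\<not> covers PTp PTp_le Top v"
  unfolding covers_def by auto

text \<open>The key property of the Rees product: a relation \<open>(x,k) \<le> (y,l)\<close> can be refined
  through any \<open>z \<in> [x,y]\<close>, by cutting \<open>l\<close> at a suitable length.\<close>
lemma PT_interpolate:
  assumes xk: "(x, k) \<in> PT" and yl: "(y, l) \<in> PT" and R: "PT_le (x, k) (y, l)"
    and z: "z \<in> P" "le x z" "le z y"
  obtains k' where "(z, k') \<in> PT" "PT_le (x, k) (z, k')" "PT_le (z, k') (y, l)"
proof -
  have pf: "prefix k l" and rd: "int (length l) - int (length k) \<le> int (rk y) - int (rk x)"
    using R PT_le_iff by auto
  have kx: "length k \<le> rk x" and l: "set l \<subseteq> {1..t}" "length l \<le> n"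
    using xk yl mem_PT by auto
  have rxz: "rk x \<le> rk z" and rzy: "rk z \<le> rk y"
    using rank_le z xk yl mem_PT by auto
  have lk: "length k \<le> length l" using pf prefix_length_le by blast
  define m where "m = min (length l - length k) (rk z - rk x)"
  define k' where "k' = take (length k + m) l"
  have lk': "length k' = length k + m" unfolding k'_def m_def using lk by auto
  have "length k' \<le> length l" "set k' \<subseteq> {1..t}"
    unfolding k'_def using l set_take_subset[of "length k + m" l] by auto
  moreover have "m \<le> rk z - rk x" unfolding m_def by simp
  ultimately have "(z, k') \<in> PT"
    unfolding mem_PT using z l lk' kx rxz by auto
  moreover have "prefix k k'"
    unfolding k'_def using pf by (metis append_eq_conv_conj prefixE prefixI take_add)
  then have "PT_le (x, k) (z, k')" unfolding PT_le_iff using lk' z rxz unfolding m_def by auto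
  moreover have "PT_le (z, k') (y, l)"
    unfolding PT_le_iff using z take_is_prefix[of _ l] lk' rd rxz rzy lk
    unfolding k'_def m_def by (auto simp: min_def)
  ultimately show ?thesis using that by blast
qed

text \<open>A cover between points of \<open>P * T\<close> is a cover of \<open>P\<close> in the first coordinate and, in
  the second, either no move or the addition of one letter; interpolation rules out the rest.\<close>
lemma covers_El_El_D:
  assumes xk: "(x, k) \<in> PT" and yl: "(y, l) \<in> PT"
    and cv: "covers PTp PTp_le (El (x, k)) (El (y, l))"
  shows "covers P le x y \<and> (l = k \<or> (\<exists>a\<in>{1..t}. l = k @ [a]))"
proof -
  have R: "PT_le (x, k) (y, l)" and ne: "(x, k) \<noteq> (y, l)"
    and between: "\<And>v. v \<in> PTp \<Longrightarrow> PTp_le (El (x, k)) v \<Longrightarrow> PTp_le v (El (y, l)) \<Longrightarrow>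
                     v = El (x, k) \<or> v = El (y, l)"
    using cv unfolding covers_def by auto
  have pf: "prefix k l" and rd: "int (length l) - int (length k) \<le> int (rk y) - int (rk x)"
    and xy_le: "le x y"
    using R PT_le_iff by auto
  have xP: "x \<in> P" and yP: "y \<in> P" and l: "set l \<subseteq> {1..t}"
    using xk yl mem_PT by auto
  have "x \<noteq> y"
    using rd prefix_length_eq[OF pf] ne by force
  moreover have "z = x \<or> z = y" if z: "z \<in> P" "le x z" "le z y" for z
  proof -
    obtain k' where "(z, k') \<in> PT" "PT_le (x, k) (z, k')" "PT_le (z, k') (y, l)"
      using PT_interpolate[OF xk yl R z] .
    then show ?thesis using between[of "El (z, k')"] mem_PTp by auto
  qed
  ultimately have cxy: "covers P le x y" using xP yP xy_le unfolding covers_def by blast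
  then have "length l \<le> Suc (length k)" using rd rank_cover by simp
  moreover obtain zs where "l = k @ zs" using pf prefixE by blast
  ultimately have "l = k \<or> (\<exists>a. l = k @ [a])" by (cases zs) auto
  then show ?thesis using cxy l by auto
qed

text \<open>Conversely such steps are covers, since ranks increase by one along covers of \<open>P\<close>.\<close>
lemma covers_El_El_I:
  assumes xk: "(x, k) \<in> PT" and yl: "(y, l) \<in> PT"
    and cxy: "covers P le x y" and step: "l = k \<or> (\<exists>a\<in>{1..t}. l = k @ [a])"
  shows "covers PTp PTp_le (El (x, k)) (El (y, l))"
proof -
  have "PT_le (x, k) (y, l)"
    unfolding PT_le_iff using cxy step rank_cover[OF cxy] unfolding covers_def by auto
  moreover have "v = El (x, k) \<or> v = El (y, l)"
    if v_between: "v \<in> PTp" "PTp_le (El (x, k)) v" "PTp_le v (El (y, l))" for v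
  proof -
    obtain z m where v: "v = El (z, m)" "(z, m) \<in> PT" using v_between mem_PTp by auto
    have R1: "PT_le (x, k) (z, m)" and R2: "PT_le (z, m) (y, l)" using v_between v by auto
    then have "z = x \<or> z = y" using cxy v mem_PT unfolding PT_le_iff covers_def by blast
    then show ?thesis
      using R1 R2 v prefix_length_eq unfolding PT_le_iff by fastforce
  qed
  moreover have "El (x, k) \<in> PTp" "El (y, l) \<in> PTp" "x \<noteq> y"
    using xk yl cxy mem_PTp unfolding covers_def by auto
  ultimately show ?thesis
    unfolding covers_def by auto
qed

lemma covers_El_El_iff:
  assumes "(x, k) \<in> PT" "(y, l) \<in> PT"
  shows "covers PTp PTp_le (El (x, k)) (El (y, l)) \<longleftrightarrow>
           covers P le x y \<and> (l = k \<or> (\<exists>a\<in>{1..t}. l = k @ [a]))"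
  using covers_El_El_D[OF assms] covers_El_El_I[OF assms] by blast

lemma covers_El_Top_iff:
  assumes xk: "(x, k) \<in> PT"
  shows "covers PTp PTp_le (El (x, k)) Top \<longleftrightarrow> x = top"
proof
  assume cv: "covers PTp PTp_le (El (x, k)) Top"
  have xP: "x \<in> P" and "length k \<le> rk x" using xk mem_PT by auto
  moreover have "rk x \<le> rk top" using rank_le xP top_in le_top by blast
  ultimately have "(top, k) \<in> PT" "PT_le (x, k) (top, k)"
    using xk mem_PT top_in le_top unfolding PT_le_iff by auto
  then show "x = top" using cv mem_PTp unfolding covers_def by fastforce
next
  assume xt: "x = top"
  have "v = El (x, k)" if above: "v \<in> PTp" "PTp_le (El (x, k)) v" "v \<noteq> Top" for v
  proof -
    obtain z m where v: "v = El (z, m)" "(z, m) \<in> PT" using above mem_PTp by auto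
    then have R: "PT_le (top, k) (z, m)" using above xt by simp
    then have "z = top" using v antisym top_in le_top mem_PT unfolding PT_le_iff by blast
    then show ?thesis using R v xt prefix_length_eq unfolding PT_le_iff by auto
  qed
  then show "covers PTp PTp_le (El (x, k)) Top"
    using xk mem_PTp unfolding covers_def by auto
qed

end

section \<open>Maximal chains of \<open>(P * T\<^sub>t\<^sub>,\<^sub>n)\<^sup>+\<close> as pairs (maximal chain of \<open>P\<close>, word)\<close>

text \<open>A word \<open>z\<close> over \<open>{0..t}\<close> describes a walk in the tree \<open>T\<^sub>t\<^sub>,\<^sub>n\<close>: letter \<open>0\<close> means
  ``stay'', a letter \<open>a > 0\<close> means ``append \<open>a\<close>''.  \<open>stem z i\<close> is the vertex reached after
  the first \<open>i\<close> letters, and \<open>letters\<close> reads a walk back as a word.\<close>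
definition stem :: "nat list \<Rightarrow> nat \<Rightarrow> nat list" where
  "stem z i = filter (\<lambda>a. a \<noteq> 0) (take i z)"

definition letters :: "nat list list \<Rightarrow> nat list" where
  "letters ks = map (\<lambda>i. if ks ! Suc i = ks ! i then 0 else last (ks ! Suc i)) [0..<length ks - 1]"

lemma stem_0 [simp]: "stem z 0 = []"
  by (simp add: stem_def)

lemma stem_Suc: "i < length z \<Longrightarrow> stem z (Suc i) = stem z i @ (if z ! i = 0 then [] else [z ! i])"
  by (simp add: stem_def take_Suc_conv_app_nth)

lemma stem_length: "length (stem z i) \<le> i"
  unfolding stem_def by (rule order_trans[OF length_filter_le]) simp

lemma stem_set: "set z \<subseteq> {0..t} \<Longrightarrow> set (stem z i) \<subseteq> {1..t}"
  unfolding stem_def using set_take_subset[of i z] by auto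

lemma letters_stem: "letters (map (stem z) [0..<Suc (length z)]) = z"
  by (rule nth_equalityI) (auto simp: letters_def stem_Suc nth_append simp del: upt_Suc)

lemma stem_letters:
  assumes "ks \<noteq> []" "hd ks = []"
    and steps: "\<And>i. Suc i < length ks \<Longrightarrow> ks ! Suc i = ks ! i \<or> (\<exists>a>0. ks ! Suc i = ks ! i @ [a])"
    and "i < length ks"
  shows "stem (letters ks) i = ks ! i"
  using assms(4)
proof (induction i)
  case 0 then show ?case using assms(1,2) by (simp add: hd_conv_nth)
next
  case (Suc i)
  have letter: "letters ks ! i = (if ks ! Suc i = ks ! i then 0 else last (ks ! Suc i))"
    using Suc.prems by (simp add: letters_def)
  have "stem (letters ks) (Suc i) = ks ! i @ (if letters ks ! i = 0 then [] else [letters ks ! i])"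
    using Suc by (simp add: stem_Suc letters_def)
  then show ?case using steps[OF Suc.prems] letter by auto
qed

context rees_tree
begin

abbreviation M :: "'a list set" where "M \<equiv> maxchains P le"

abbreviation words :: "nat list set" where "words \<equiv> {z. length z = n \<and> set z \<subseteq> {0..t}}"

definition lift :: "'a list \<Rightarrow> nat list \<Rightarrow> ('a \<times> nat list) ext list" where
  "lift d z = map (\<lambda>i. El (d ! i, stem z i)) [0..<Suc n] @ [Top]"

lemma lift_length [simp]: "length (lift d z) = Suc (Suc n)"
  by (simp add: lift_def)

lemma lift_nth: "i \<le> n \<Longrightarrow> lift d z ! i = El (d ! i, stem z i)"
  by (simp add: lift_def nth_append del: upt_Suc)

lemma lift_last: "lift d z ! Suc n = Top"
  by (simp add: lift_def nth_append del: upt_Suc)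

lemma M_length: "d \<in> M \<Longrightarrow> length d = Suc n"
  using maxchain_length rank_top by simp

lemma M_covers: assumes "d \<in> M" "i < n" shows "covers P le (d ! i) (d ! Suc i)"
  using assms M_length[OF assms(1)] maxchains_iff unfolding cover_chain_def by auto

lemma M_first: "d \<in> M \<Longrightarrow> d ! 0 = bot"
  using M_length maxchains_iff by (metis hd_conv_nth list.size(3) nat.distinct(1))

lemma M_last: "d \<in> M \<Longrightarrow> d ! n = top"
  using M_length maxchains_iff by (metis diff_Suc_1 last_conv_nth list.size(3) nat.distinct(1))

lemma finite_M: "finite M"
proof (rule finite_subset)
  show "M \<subseteq> {d. set d \<subseteq> P \<and> length d = Suc n}"
    using M_length maxchains_iff cover_chain_set by blast
  show "finite {d. set d \<subseteq> P \<and> length d = Suc n}"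
    using finite_P by (rule finite_lists_length_eq)
qed

text \<open>The points of a lifted chain lie in \<open>P * T\<close>: the tree coordinate after \<open>i\<close> steps has
  length at most \<open>i\<close>, which is the rank of \<open>d\<^sub>i\<close>.\<close>
lemma lift_point_in: "d \<in> M \<Longrightarrow> set z \<subseteq> {0..t} \<Longrightarrow> i \<le> n \<Longrightarrow> (d ! i, stem z i) \<in> PT"
  unfolding mem_PT using M_length maxchains_iff cover_chain_set maxchain_rank stem_set stem_length
  by (metis le_imp_less_Suc nth_mem order.trans subsetD)

lemma lift_in_mchains:
  assumes d: "d \<in> M" and z: "z \<in> words"
  shows "lift d z \<in> mchains PTp PTp_le (El (bot, [])) Top"
proof -
  have "lift d z ! i \<in> PTp" if "i \<le> Suc n" for i
  proof (cases "i \<le> n")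
    case True then show ?thesis using lift_nth lift_point_in[OF d] z mem_PTp by auto
  next
    case False then show ?thesis using that lift_last mem_PTp by (simp add: le_Suc_eq)
  qed
  then have "set (lift d z) \<subseteq> PTp" by (auto simp: in_set_conv_nth)
  moreover have "covers PTp PTp_le (lift d z ! i) (lift d z ! Suc i)" if "i \<le> n" for i
  proof (cases "i < n")
    case True
    have "z ! i \<in> set z" using z True by simp
    then have "z ! i \<in> {0..t}" using z by blast
    then have "stem z (Suc i) = stem z i \<or> (\<exists>a\<in>{1..t}. stem z (Suc i) = stem z i @ [a])"
      using stem_Suc[of i z] True z by (cases "z ! i = 0") auto
    then show ?thesis
      using covers_El_El_iff[OF lift_point_in[OF d _ that] lift_point_in[OF d, of z "Suc i"]]
        M_covers[OF d True] True z by (simp add: lift_nth)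
  next
    case False
    then have "i = n" using that by simp
    then show ?thesis using covers_El_Top_iff[OF lift_point_in[OF d _ that]] M_last[OF d] z
      by (simp add: lift_nth lift_last)
  qed
  moreover have "hd (lift d z) = El (bot, [])" "last (lift d z) = Top"
    using lift_nth[of 0 d z] M_first[OF d] by (simp_all add: hd_conv_nth lift_def)
  moreover have "lift d z \<noteq> []" by (simp add: lift_def)
  ultimately show ?thesis unfolding mchains_def cover_chain_def by simp
qed

lemma lift_inj: "inj_on (\<lambda>(d, z). lift d z) (M \<times> words)"
proof -
  have "d = d' \<and> z = z'"
    if dz: "d \<in> M" "d' \<in> M" "z \<in> words" "z' \<in> words" and same: "lift d z = lift d' z'"
    for d z d' z'
  proof
    have eq: "d ! i = d' ! i \<and> stem z i = stem z' i" if "i \<le> n" for i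
      using that same lift_nth by (metis ext.inject prod.inject)
    show "d = d'" using eq M_length dz by (intro nth_equalityI) auto
    have "map (stem z) [0..<Suc n] = map (stem z') [0..<Suc n]"
      using eq by (auto simp del: upt_Suc)
    moreover have "z = letters (map (stem z) [0..<Suc n])" "z' = letters (map (stem z') [0..<Suc n])"
      using letters_stem[of z] letters_stem[of z'] dz by (simp_all del: upt_Suc)
    ultimately show "z = z'" by metis
  qed
  then show ?thesis unfolding inj_on_def by clarsimp
qed

lemma mchain_points:
  assumes "c \<in> mchains PTp PTp_le (El (bot, [])) Top"
  obtains ps where "c = map El ps @ [Top]" "set ps \<subseteq> PT" "ps \<noteq> []" "hd ps = (bot, [])"
    "fst (last ps) = top"
    "\<forall>i. Suc i < length ps \<longrightarrow> covers PTp PTp_le (El (ps ! i)) (El (ps ! Suc i))"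
proof -
  have cc: "cover_chain PTp PTp_le c" and hc: "hd c = El (bot, [])" and lc: "last c = Top"
    using assms unfolding mchains_def by auto
  have ne: "c \<noteq> []" using cc by auto
  have c_split: "c = butlast c @ [Top]" using ne lc by (metis append_butlast_last_id)
  have cov: "covers PTp PTp_le (c ! i) (c ! Suc i)" if "i < length (butlast c)" for i
    using cc that unfolding cover_chain_def by auto
  have points: "\<exists>p. v = El p \<and> p \<in> PT" if v: "v \<in> set (butlast c)" for v
  proof -
    obtain i where i: "i < length (butlast c)" "v = c ! i"
      using v by (auto simp: in_set_conv_nth nth_butlast)
    then have "v \<noteq> Top" using cov[OF i(1)] no_cover_from_Top by auto
    moreover have "v \<in> PTp" using v cc cover_chain_set in_set_butlastD by fast
    ultimately show ?thesis using mem_PTp by auto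
  qed
  then obtain ps where ps1: "butlast c = map El ps"
    using ex_map_conv[of "butlast c" El] by blast
  have ps2: "set ps \<subseteq> PT" using points ps1 by force
  note ps = ps1 ps2
  have c_eq: "c = map El ps @ [Top]" using c_split ps by simp
  have ne_ps: "ps \<noteq> []" and hd_ps: "hd ps = (bot, [])" using hc c_eq by (cases ps; simp)+
  have "covers PTp PTp_le (El (last ps)) Top"
    using cov[of "length ps - 1"] ne_ps ps(1) c_eq by (simp add: nth_append last_conv_nth)
  moreover have "last ps \<in> PT" using ps(2) ne_ps last_in_set by blast
  ultimately have last_ps: "fst (last ps) = top"
    using covers_El_Top_iff[of "fst (last ps)" "snd (last ps)"] by simp
  have "covers PTp PTp_le (El (ps ! i)) (El (ps ! Suc i))" if "Suc i < length ps" for i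
    using cov[of i] that ps(1) c_eq by (simp add: nth_append)
  then have "\<forall>i. Suc i < length ps \<longrightarrow> covers PTp PTp_le (El (ps ! i)) (El (ps ! Suc i))" by blast
  from that[OF c_eq ps(2) ne_ps hd_ps last_ps this] show ?thesis .
qed

lemma mchain_projections:
  assumes c: "c \<in> mchains PTp PTp_le (El (bot, [])) Top"
  obtains ps where "c = map El ps @ [Top]" "map fst ps \<in> M" "hd ps = (bot, [])"
    "\<forall>i. Suc i < length ps \<longrightarrow>
       snd (ps ! Suc i) = snd (ps ! i) \<or> (\<exists>a\<in>{1..t}. snd (ps ! Suc i) = snd (ps ! i) @ [a])"
proof -
  obtain ps where ps: "c = map El ps @ [Top]" "set ps \<subseteq> PT" "ps \<noteq> []" "hd ps = (bot, [])"
    "fst (last ps) = top" "\<forall>i. Suc i < length ps \<longrightarrow> covers PTp PTp_le (El (ps ! i)) (El (ps ! Suc i))"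
    using mchain_points[OF c] by blast
  have step: "covers P le (fst (ps ! i)) (fst (ps ! Suc i)) \<and>
      (snd (ps ! Suc i) = snd (ps ! i) \<or> (\<exists>a\<in>{1..t}. snd (ps ! Suc i) = snd (ps ! i) @ [a]))"
    if "Suc i < length ps" for i
  proof -
    have "ps ! i \<in> PT" "ps ! Suc i \<in> PT" using ps(2) that by auto
    then show ?thesis
      using ps(6) covers_El_El_iff[of "fst (ps ! i)" "snd (ps ! i)" "fst (ps ! Suc i)" "snd (ps ! Suc i)"] that
      by simp
  qed
  have "fst p \<in> P" if "p \<in> set ps" for p
    using that ps(2) mem_PT[of "fst p" "snd p"] by auto
  then have "set (map fst ps) \<subseteq> P" by auto
  then have "cover_chain P le (map fst ps)"
    unfolding cover_chain_def using ps(3) step by simp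
  then have "map fst ps \<in> M"
    unfolding maxchains_iff using ps(3-5) by (simp add: hd_map last_map)
  moreover have "\<forall>i. Suc i < length ps \<longrightarrow>
       snd (ps ! Suc i) = snd (ps ! i) \<or> (\<exists>a\<in>{1..t}. snd (ps ! Suc i) = snd (ps ! i) @ [a])"
    using step by blast
  ultimately show ?thesis using that ps(1,4) by blast
qed

lemma lift_of_points:
  assumes "length ps = Suc n" "\<And>i. i \<le> n \<Longrightarrow> stem z i = snd (ps ! i)"
  shows "lift (map fst ps) z = map El ps @ [Top]"
proof -
  have "map El ps = map (\<lambda>i. El (map fst ps ! i, stem z i)) [0..<Suc n]"
    by (rule nth_equalityI) (use assms in \<open>auto simp del: upt_Suc\<close>)
  then show ?thesis by (simp add: lift_def del: upt_Suc)
qed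

text \<open>Every maximal chain is a lifted chain: read the word off the tree walk.\<close>
lemma lift_surj:
  assumes c: "c \<in> mchains PTp PTp_le (El (bot, [])) Top"
  obtains d z where "d \<in> M" "z \<in> words" "c = lift d z"
proof -
  obtain ps where ps: "c = map El ps @ [Top]" "map fst ps \<in> M" "hd ps = (bot, [])"
    and walk: "\<forall>i. Suc i < length ps \<longrightarrow>
       snd (ps ! Suc i) = snd (ps ! i) \<or> (\<exists>a\<in>{1..t}. snd (ps ! Suc i) = snd (ps ! i) @ [a])"
    using mchain_projections[OF c] by blast
  define d where "d = map fst ps"
  define ks where "ks = map snd ps"
  define z where "z = letters ks"
  have d: "d \<in> M" using ps(2) unfolding d_def .
  then have len: "length ps = Suc n" using M_length[OF d] unfolding d_def by simp
  have ks_steps: "ks ! Suc i = ks ! i \<or> (\<exists>a>0. ks ! Suc i = ks ! i @ [a])" if "Suc i < length ks" for i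
  proof -
    have i: "Suc i < length ps" using that unfolding ks_def by simp
    then have "snd (ps ! Suc i) = snd (ps ! i) \<or> (\<exists>a\<in>{1..t}. snd (ps ! Suc i) = snd (ps ! i) @ [a])"
      using walk by blast
    then show ?thesis unfolding ks_def using i by auto
  qed
  have stems: "stem z i = ks ! i" if "i < length ks" for i
  proof -
    have "ps \<noteq> []" using len by auto
    then show ?thesis
      unfolding z_def using stem_letters[of ks, OF _ _ ks_steps that] ps(3) unfolding ks_def
      by (simp add: hd_map)
  qed
  have "z ! i \<in> {0..t}" if "i < n" for i
  proof -
    have i: "Suc i < length ps" using that len by simp
    then have "z ! i = (if ks ! Suc i = ks ! i then 0 else last (ks ! Suc i))"
      unfolding z_def letters_def ks_def by simp
    moreover have "ks ! Suc i = ks ! i \<or> (\<exists>a\<in>{1..t}. ks ! Suc i = ks ! i @ [a])"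
      using walk i unfolding ks_def by simp
    ultimately show ?thesis by auto
  qed
  moreover have "length z = n" unfolding z_def letters_def ks_def using len by simp
  ultimately have z: "z \<in> words" by (auto simp: in_set_conv_nth)
  have "c = lift d z"
    using lift_of_points[of ps z] len stems ps(1) unfolding d_def ks_def by simp
  with d z show ?thesis by (rule that)
qed

lemma lift_bij: "bij_betw (\<lambda>(d, z). lift d z) (M \<times> words) (mchains PTp PTp_le (El (bot, [])) Top)"
proof -
  have "c \<in> (\<lambda>(d, z). lift d z) ` (M \<times> words)"
    if c: "c \<in> mchains PTp PTp_le (El (bot, [])) Top" for c
  proof -
    obtain d z where "d \<in> M" "z \<in> words" "c = lift d z" using lift_surj[OF c] .
    then show ?thesis by (intro rev_image_eqI[of "(d, z)"]) auto
  qed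
  then show ?thesis
    unfolding bij_betw_def using lift_inj lift_in_mchains by auto
qed

end

section \<open>Counting words compatible with an ascent pattern\<close>

text \<open>These are exactly the words making a lifted chain ascent free (see below).\<close>
fun admissible :: "bool list \<Rightarrow> nat list \<Rightarrow> bool" where
  "admissible [] [x] = (x \<noteq> 0)"
| "admissible (a # A) (x # y # z) = ((a \<longrightarrow> x \<noteq> 0 \<and> y = 0) \<and> admissible A (y # z))"
| "admissible _ _ = False"

lemma admissible_iff:
  "admissible A z \<longleftrightarrow> length z = Suc (length A) \<and>
     (\<forall>i<length A. A ! i \<longrightarrow> z ! i \<noteq> 0 \<and> z ! Suc i = 0) \<and> last z \<noteq> 0"
proof (induction A z rule: admissible.induct)
  case (2 a A x y z)
  have "(\<forall>i<length (a # A). (a # A) ! i \<longrightarrow> (x # y # z) ! i \<noteq> 0 \<and> (x # y # z) ! Suc i = 0) \<longleftrightarrow>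
        (a \<longrightarrow> x \<noteq> 0 \<and> y = 0) \<and> (\<forall>i<length A. A ! i \<longrightarrow> (y # z) ! i \<noteq> 0 \<and> (y # z) ! Suc i = 0)"
    by (auto simp: All_less_Suc2)
  then show ?case using "2.IH" by auto
qed auto

lemma admissible_False_Cons: "admissible (False # A) (x # z) = admissible A z"
  by (cases z) auto

lemma all_Suc_less_Cons:
  "(\<forall>i. Suc i < length (a # A) \<longrightarrow> Q i) \<longleftrightarrow> (A \<noteq> [] \<longrightarrow> Q 0) \<and> (\<forall>i. Suc i < length A \<longrightarrow> Q (Suc i))"
proof -
  have "(\<forall>i. Suc i < length (a # A) \<longrightarrow> Q i) \<longleftrightarrow> (\<forall>i. i < length A \<longrightarrow> Q i)" by simp
  also have "\<dots> \<longleftrightarrow> (A \<noteq> [] \<longrightarrow> Q 0) \<and> (\<forall>i. Suc i < length A \<longrightarrow> Q (Suc i))"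
    by (metis Suc_less_eq length_greater_0_conv not0_implies_Suc)
  finally show ?thesis .
qed

text \<open>A pattern is sparse if no two marks are adjacent and the last position is unmarked;
  only sparse patterns admit words.\<close>
fun sparse :: "bool list \<Rightarrow> bool" where
  "sparse [] = True"
| "sparse (False # A) = sparse A"
| "sparse (True # False # A) = sparse A"
| "sparse [True] = False"
| "sparse (True # True # A) = False"

lemma sparse_iff:
  "sparse A \<longleftrightarrow> (\<forall>i. Suc i < length A \<longrightarrow> \<not> (A ! i \<and> A ! Suc i)) \<and> (A \<noteq> [] \<longrightarrow> \<not> last A)"
proof (induction A rule: sparse.induct)
  case (2 A) then show ?case by (simp only: all_Suc_less_Cons) auto
next
  case (3 A) then show ?case by (simp only: all_Suc_less_Cons) auto
next
  case (5 A) then show ?case by (simp only: all_Suc_less_Cons) auto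
qed auto

definition marks :: "bool list \<Rightarrow> nat" where
  "marks A = length (filter id A)"

lemma sparse_marks: "sparse A \<Longrightarrow> 2 * marks A \<le> length A"
  by (induction A rule: sparse.induct) (auto simp: marks_def)

abbreviation adm_words :: "nat \<Rightarrow> bool list \<Rightarrow> nat list set" where
  "adm_words t A \<equiv> {z. set z \<subseteq> {0..t} \<and> admissible A z}"

lemma adm_words_Nil: "adm_words t [] = (\<lambda>x. [x]) ` {1..t}"
proof (intro set_eqI iffI)
  fix z assume "z \<in> adm_words t []"
  then show "z \<in> (\<lambda>x. [x]) ` {1..t}" using admissible_iff[of "[]" z] by (cases z) auto
qed auto

lemma adm_words_False: "adm_words t (False # A) = (\<lambda>(x, z). x # z) ` ({0..t} \<times> adm_words t A)"
proof (intro set_eqI iffI)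
  fix w assume "w \<in> adm_words t (False # A)"
  then show "w \<in> (\<lambda>(x, z). x # z) ` ({0..t} \<times> adm_words t A)"
    by (cases w) (auto simp: admissible_False_Cons)
qed (auto simp: admissible_False_Cons)

lemma adm_words_True_False:
  "adm_words t (True # False # A) = (\<lambda>(x, z). x # 0 # z) ` ({1..t} \<times> adm_words t A)"
proof (intro set_eqI iffI)
  fix w assume w: "w \<in> adm_words t (True # False # A)"
  then obtain x y z where "w = x # y # z" by (cases w; cases "tl w") auto
  then show "w \<in> (\<lambda>(x, z). x # 0 # z) ` ({1..t} \<times> adm_words t A)"
    using w by (auto simp: admissible_False_Cons)
qed (auto simp: admissible_False_Cons)

lemma not_admissible_True_end: "\<not> admissible [True] z" "\<not> admissible (True # True # A) z"
proof -
  show "\<not> admissible [True] z" by (cases z; cases "tl z"; cases "tl (tl z)") auto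
  show "\<not> admissible (True # True # A) z" by (cases z; cases "tl z"; cases "tl (tl z)") auto
qed

text \<open>The number of admissible words: each unmarked position not preceded by a mark
  contributes a factor \<open>1 + t\<close>, each mark and the last position a factor \<open>t\<close>.\<close>
lemma card_adm_words:
  "card (adm_words t A) = (if sparse A then t ^ (marks A + 1) * (1 + t) ^ (length A - 2 * marks A) else 0)"
proof (induction A rule: sparse.induct)
  case 1 then show ?case by (simp add: adm_words_Nil card_image inj_on_def marks_def)
next
  case (2 A)
  have "card (adm_words t (False # A)) = (1 + t) * card (adm_words t A)"
    unfolding adm_words_False
    by (subst card_image) (auto simp: inj_on_def card_cartesian_product)
  then show ?case using 2 sparse_marks[of A] by (auto simp: marks_def Suc_diff_le algebra_simps)
next
  case (3 A)
  have "card (adm_words t (True # False # A)) = t * card (adm_words t A)"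
    unfolding adm_words_True_False
    by (subst card_image) (auto simp: inj_on_def card_cartesian_product)
  then show ?case using 3 by (simp add: marks_def)
qed (simp_all add: not_admissible_True_end)

definition ascent_pattern :: "('l \<Rightarrow> 'l \<Rightarrow> bool) \<Rightarrow> 'l list \<Rightarrow> bool list" where
  "ascent_pattern lle w = map (\<lambda>i. lle (w ! i) (w ! Suc i)) [0..<length w - 1]"

lemma ascent_pattern_length [simp]: "length (ascent_pattern lle w) = length w - 1"
  by (simp add: ascent_pattern_def)

lemma ascent_pattern_nth: "i < length w - 1 \<Longrightarrow> ascent_pattern lle w ! i = lle (w ! i) (w ! Suc i)"
  by (simp add: ascent_pattern_def)

lemma marks_ascent_pattern: "marks (ascent_pattern lle w) = asc lle w"
proof -
  have "marks (ascent_pattern lle w) = card {i. i < length w - 1 \<and> ascent_pattern lle w ! i}"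
    unfolding marks_def by (simp add: length_filter_conv_card)
  also have "{i. i < length w - 1 \<and> ascent_pattern lle w ! i} = {i. Suc i < length w \<and> lle (w ! i) (w ! Suc i)}"
    by (auto simp: ascent_pattern_nth)
  finally show ?thesis unfolding asc_def .
qed

lemma sparse_ascent_pattern:
  assumes "length w = n" "n \<ge> 1"
  shows "sparse (ascent_pattern lle w) \<longleftrightarrow>
    (\<forall>i. i + 2 < n \<longrightarrow> \<not> (lle (w ! i) (w ! (i + 1)) \<and> lle (w ! (i + 1)) (w ! (i + 2))))
    \<and> (n \<ge> 2 \<longrightarrow> \<not> lle (w ! (n - 2)) (w ! (n - 1)))"
proof -
  let ?A = "ascent_pattern lle w"
  have "(\<forall>i. Suc i < length ?A \<longrightarrow> \<not> (?A ! i \<and> ?A ! Suc i)) \<longleftrightarrow>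
      (\<forall>i. i + 2 < n \<longrightarrow> \<not> (lle (w ! i) (w ! (i + 1)) \<and> lle (w ! (i + 1)) (w ! (i + 2))))"
    using assms by (auto simp: ascent_pattern_nth)
  moreover have "(?A \<noteq> [] \<longrightarrow> \<not> last ?A) \<longleftrightarrow> (n \<ge> 2 \<longrightarrow> \<not> lle (w ! (n - 2)) (w ! (n - 1)))"
  proof (cases "n \<ge> 2")
    case True
    have len: "length ?A = n - 1" using assms by simp
    then have ne: "?A \<noteq> []" using True by (metis Suc_1 diff_is_0_eq length_0_conv not_less_eq_eq)
    have "Suc (n - 2) = n - 1" "n - 2 < length w - 1" using True assms by auto
    then have "last ?A = lle (w ! (n - 2)) (w ! (n - 1))"
      using ne len ascent_pattern_nth[of "n - 2" w lle] by (simp add: last_conv_nth numeral_2_eq_2)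
    then show ?thesis using True ne by simp
  next
    case False
    then have "length ?A = 0" using assms by simp
    then have "?A = []" by blast
    then show ?thesis using False by simp
  qed
  ultimately show ?thesis using sparse_iff[of ?A] by simp
qed

lemma card_adm_words_ascents:
  assumes "length w = n" "n \<ge> 1"
  shows "card (adm_words t (ascent_pattern lle w)) =
    (if (\<forall>i. i + 2 < n \<longrightarrow> \<not> (lle (w ! i) (w ! (i + 1)) \<and> lle (w ! (i + 1)) (w ! (i + 2))))
        \<and> (n \<ge> 2 \<longrightarrow> \<not> lle (w ! (n - 2)) (w ! (n - 1)))
     then t ^ (asc lle w + 1) * (1 + t) ^ (n - 1 - 2 * asc lle w) else 0)"
  using card_adm_words[of t "ascent_pattern lle w"]
  unfolding sparse_ascent_pattern[OF assms] marks_ascent_pattern ascent_pattern_length assms(1) .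

section \<open>The last label of an EL-labeling of \<open>\<hat>P\<close>\<close>

context bounded_semipure
begin

lemma hat_covers_El: "covers P le x y \<Longrightarrow> covers (hat_set P) (ext_le le) (El x) (El y)"
  unfolding covers_def hat_set_def by auto

lemma hat_cover_below_top:
  assumes cxt: "covers P le x top" and cv: "covers (hat_set P) (ext_le le) (El x) v"
  shows "v = El top"
proof (cases v)
  case Bot then show ?thesis using cv unfolding covers_def by simp
next
  case Top
  have "El top \<in> hat_set P" "ext_le le (El x) (El top)" "El x \<noteq> El top"
    using top_in le_top cxt unfolding hat_set_def covers_def by auto
  then show ?thesis using cv Top unfolding covers_def by auto
next
  case (El y)
  have "y \<in> P" "le x y" "y \<noteq> x" using cv El unfolding covers_def hat_set_def by auto
  then show ?thesis using cxt le_top El unfolding covers_def by blast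
qed

lemma hat_cover_top: "covers (hat_set P) (ext_le le) (El top) v \<Longrightarrow> v = Top"
  using antisym top_in le_top unfolding covers_def hat_set_def by (cases v) auto

lemma hat_mchain_below_top:
  assumes cxt: "covers P le x top" and c: "c \<in> mchains (hat_set P) (ext_le le) (El x) Top"
  shows "c = [El x, El top, Top]"
proof -
  have cc: "cover_chain (hat_set P) (ext_le le) c" and hc: "hd c = El x" and lc: "last c = Top"
    using c unfolding mchains_def by auto
  obtain rest where c1: "c = El x # rest" using hc cc by (cases c) auto
  then obtain b rest2 where c2: "rest = b # rest2" using lc by (cases rest) auto
  then have b: "b = El top" using hat_cover_below_top[OF cxt] cc c1 by auto
  then obtain c3 rest3 where c3: "rest2 = c3 # rest3" using lc c1 c2 by (cases rest2) auto
  then have "c3 = Top" using hat_cover_top cc c1 c2 b by auto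
  moreover have "\<not> covers (hat_set P) (ext_le le) Top v" for v
    unfolding covers_def by simp
  then have "rest3 = []" using cc c1 c2 c3 \<open>c3 = Top\<close> by (cases rest3) auto
  ultimately show ?thesis using c1 c2 c3 b by simp
qed

lemma EL_last_ascent:
  assumes EL: "EL_labeling (hat_set P) (ext_le le) L lle lamP" and cxt: "covers P le x top"
  shows "lle (lamP (El x) (El top)) (lamP (El top) Top)"
proof -
  have "El x \<in> hat_set P" "Top \<in> hat_set P"
    using cxt unfolding covers_def hat_set_def by auto
  then obtain c where c: "c \<in> mchains (hat_set P) (ext_le le) (El x) Top"
    and inc: "weakly_inc lle (labels lamP c)"
    using EL unfolding EL_labeling_def by fastforce
  have "c = [El x, El top, Top]" by (rule hat_mchain_below_top[OF cxt c])
  then have "lle (labels lamP c ! 0) (labels lamP c ! 1)"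
    using inc unfolding weakly_inc_def by simp
  then show ?thesis using \<open>c = [El x, El top, Top]\<close> by (simp add: labels_def)
qed

end

section \<open>Ascent free chains and the final count\<close>

lemma sum_by_fibres:
  assumes "finite A"
  shows "(\<Sum>a\<in>A. g (h a)) = (\<Sum>w\<in>h ` A. card {a\<in>A. h a = w} * g w)"
proof -
  have "(\<Sum>a\<in>A. g (h a)) = (\<Sum>w\<in>h ` A. \<Sum>a\<in>{a\<in>A. h a = w}. g (h a))"
    by (rule sum.image_gen[OF assms])
  also have "\<dots> = (\<Sum>w\<in>h ` A. card {a\<in>A. h a = w} * g w)"
    by (intro sum.cong) auto
  finally show ?thesis .
qed

locale rees_tree_EL = rees_tree +
  fixes L :: "'l set" and lle :: "'l \<Rightarrow> 'l \<Rightarrow> bool" and lamP :: "'a ext \<Rightarrow> 'a ext \<Rightarrow> 'l"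
  assumes EL: "EL_labeling (hat_set P) (ext_le le) L lle lamP"
    and n_pos: "n \<ge> 1"
begin

definition plab :: "'a list \<Rightarrow> 'l list" where
  "plab d = labels (\<lambda>x y. lamP (El x) (El y)) d"

lemma plab_length: "d \<in> M \<Longrightarrow> length (plab d) = n"
  unfolding plab_def using M_length by simp

lemma plab_nth: "d \<in> M \<Longrightarrow> i < n \<Longrightarrow> plab d ! i = lamP (El (d ! i)) (El (d ! Suc i))"
  unfolding plab_def using M_length by (simp add: labels_nth)

lemma plab_in_L: "d \<in> M \<Longrightarrow> set (plab d) \<subseteq> L"
  using EL hat_covers_El M_covers unfolding EL_labeling_def
  by (auto simp: in_set_conv_nth plab_length plab_nth)

lemma plab_last_ascent: "d \<in> M \<Longrightarrow> lle (plab d ! (n - 1)) (lamP (El top) Top)"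
  using EL_last_ascent[OF EL] M_covers[of d "n - 1"] M_last[of d] plab_nth[of d "n - 1"] n_pos
  by simp

lemma lift_labels:
  assumes "d \<in> M" "length z = n"
  shows "i < n \<Longrightarrow> labels (ind_lab lamP) (lift d z) ! i = (plab d ! i, if z ! i = 0 then 0 else 1)"
    and "labels (ind_lab lamP) (lift d z) ! n = (lamP (El top) Top, 0)"
proof -
  show "labels (ind_lab lamP) (lift d z) ! i = (plab d ! i, if z ! i = 0 then 0 else 1)" if "i < n"
    using that assms stem_Suc[of i z] plab_nth[OF assms(1) that]
    by (simp add: labels_nth lift_nth strict_prefix_def)
  show "labels (ind_lab lamP) (lift d z) ! n = (lamP (El top) Top, 0)"
    using M_last[OF assms(1)] by (simp add: labels_nth lift_nth lift_last)
qed

text \<open>A lifted chain is ascent free iff its tree walk is admissible for the ascent pattern of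
  the label word: an ascent of \<open>w\<close> at \<open>i\<close> must be broken by \<open>z\<^sub>i \<noteq> 0 = z\<^sub>i\<^sub>+\<^sub>1\<close>, and since the last
  \<open>P\<close>-labels always ascend, the last tree step must grow.\<close>
lemma ascent_free_lift_iff:
  assumes d: "d \<in> M" and z: "length z = n"
  shows "ascent_free (prod_le lle) (labels (ind_lab lamP) (lift d z)) \<longleftrightarrow>
           admissible (ascent_pattern lle (plab d)) z"
proof -
  let ?l = "labels (ind_lab lamP) (lift d z)"
  have step: "\<not> prod_le lle (?l ! i) (?l ! Suc i) \<longleftrightarrow>
      (ascent_pattern lle (plab d) ! i \<longrightarrow> z ! i \<noteq> 0 \<and> z ! Suc i = 0)" if "Suc i < n" for i
    using that lift_labels[OF d z] plab_length[OF d] by (simp add: prod_le_def ascent_pattern_nth)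
  have last_step: "\<not> prod_le lle (?l ! (n - 1)) (?l ! n) \<longleftrightarrow> z ! (n - 1) \<noteq> 0"
    using lift_labels(1)[OF d z, of "n - 1"] lift_labels(2)[OF d z] plab_last_ascent[OF d] n_pos by (simp add: prod_le_def)
  have "ascent_free (prod_le lle) ?l \<longleftrightarrow> (\<forall>i<n. \<not> prod_le lle (?l ! i) (?l ! Suc i))"
    unfolding ascent_free_def by auto
  also have "\<dots> \<longleftrightarrow> (\<forall>i<n - 1. \<not> prod_le lle (?l ! i) (?l ! Suc i))
                     \<and> \<not> prod_le lle (?l ! (n - 1)) (?l ! n)"
    using n_pos by (cases n) (auto simp: less_Suc_eq)
  also have "\<dots> \<longleftrightarrow> (\<forall>i<n - 1. ascent_pattern lle (plab d) ! i \<longrightarrow> z ! i \<noteq> 0 \<and> z ! Suc i = 0)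
                     \<and> z ! (n - 1) \<noteq> 0"
    using step last_step by (simp add: less_diff_conv)
  also have "\<dots> \<longleftrightarrow> admissible (ascent_pattern lle (plab d)) z"
  proof -
    have "z \<noteq> []" "length z = Suc (n - 1)" using z n_pos by auto
    then show ?thesis
      unfolding admissible_iff using plab_length[OF d] z by (simp add: last_conv_nth)
  qed
  finally show ?thesis .
qed

lemma card_ascent_free_chains:
  "card {c \<in> mchains PTp PTp_le (El (bot, [])) Top. ascent_free (prod_le lle) (labels (ind_lab lamP) c)}
     = (\<Sum>d\<in>M. card (adm_words t (ascent_pattern lle (plab d))))"
proof -
  let ?f = "\<lambda>(d, z). lift d z"
  let ?AF = "\<lambda>c. ascent_free (prod_le lle) (labels (ind_lab lamP) c)"
  let ?S = "SIGMA d:M. adm_words t (ascent_pattern lle (plab d))"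
  have adm_len: "length z = n" if "d \<in> M" "admissible (ascent_pattern lle (plab d)) z" for d z
    using that admissible_iff plab_length n_pos by auto
  have pair: "(d, z) \<in> ?S \<longleftrightarrow> (d, z) \<in> {p \<in> M \<times> words. ?AF (?f p)}" for d z
    using ascent_free_lift_iff[of d z] adm_len[of d z] by auto
  have S: "?S = {p \<in> M \<times> words. ?AF (?f p)}"
  proof (intro set_eqI)
    show "p \<in> ?S \<longleftrightarrow> p \<in> {p \<in> M \<times> words. ?AF (?f p)}" for p
      using pair[of "fst p" "snd p"] by simp
  qed
  have image: "?f ` (M \<times> words) = mchains PTp PTp_le (El (bot, [])) Top"
    using lift_bij unfolding bij_betw_def by blast
  have "{c \<in> mchains PTp PTp_le (El (bot, [])) Top. ?AF c} = ?f ` ?S"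
    unfolding S image[symmetric] by auto
  moreover have "inj_on ?f ?S" using inj_on_subset[OF lift_inj] S by blast
  moreover have "finite (adm_words t A)" for A
  proof (rule finite_subset)
    show "adm_words t A \<subseteq> {z. set z \<subseteq> {0..t} \<and> length z = Suc (length A)}"
      using admissible_iff by blast
    show "finite {z. set z \<subseteq> {0..t} \<and> length z = Suc (length A)}"
      by (rule finite_lists_length_eq) simp
  qed
  ultimately show ?thesis using finite_M by (simp add: card_image)
qed

lemma sum_by_label_words:
  "(\<Sum>d\<in>M. card (adm_words t (ascent_pattern lle (plab d))))
     = (\<Sum>w \<in> {w \<in> NDA n L lle. (n \<ge> 2 \<longrightarrow> \<not> lle (w ! (n - 2)) (w ! (n - 1)))
                                 \<and> chain_count P le lamP w > 0}.
          chain_count P le lamP w * t ^ (asc lle w + 1) * (1 + t) ^ (n - 1 - 2 * asc lle w))"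
    (is "_ = (\<Sum>w\<in>?W. _)")
proof -
  let ?f = "\<lambda>w. card (adm_words t (ascent_pattern lle w))"
  let ?cond = "\<lambda>w. (\<forall>i. i + 2 < n \<longrightarrow> \<not> (lle (w ! i) (w ! (i + 1)) \<and> lle (w ! (i + 1)) (w ! (i + 2))))
                    \<and> (n \<ge> 2 \<longrightarrow> \<not> lle (w ! (n - 2)) (w ! (n - 1)))"
  have count: "chain_count P le lamP w = card {d\<in>M. plab d = w}" for w
    unfolding chain_count_def plab_def by simp
  have W: "w \<in> ?W \<longleftrightarrow> w \<in> plab ` M \<and> ?cond w" for w
  proof
    assume w: "w \<in> ?W"
    then have "{d\<in>M. plab d = w} \<noteq> {}" using count[of w] by force
    then show "w \<in> plab ` M \<and> ?cond w" using w unfolding NDA_def by blast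
  next
    assume w: "w \<in> plab ` M \<and> ?cond w"
    then obtain d where d: "d \<in> M" "plab d = w" by blast
    then have "chain_count P le lamP w > 0" using count[of w] finite_M by (auto simp: card_gt_0_iff)
    then show "w \<in> ?W" using w d plab_length plab_in_L unfolding NDA_def by auto
  qed
  have f: "?f w = (if ?cond w then t ^ (asc lle w + 1) * (1 + t) ^ (n - 1 - 2 * asc lle w) else 0)"
    if w: "w \<in> plab ` M" for w
  proof -
    obtain d where d: "d \<in> M" and wd: "w = plab d" using w by blast
    show ?thesis unfolding wd by (rule card_adm_words_ascents[OF plab_length[OF d] n_pos])
  qed
  have "(\<Sum>d\<in>M. ?f (plab d)) = (\<Sum>w\<in>plab ` M. chain_count P le lamP w * ?f w)"
    unfolding count by (rule sum_by_fibres[OF finite_M])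
  also have "\<dots> = (\<Sum>w\<in>?W. chain_count P le lamP w * t ^ (asc lle w + 1) * (1 + t) ^ (n - 1 - 2 * asc lle w))"
    by (rule sum.mono_neutral_cong_right) (use finite_M W f in auto)
  finally show ?thesis .
qed

end

theorem theorem3p5:
  fixes P :: "'a set" and le :: "'a \<Rightarrow> 'a \<Rightarrow> bool"
    and L :: "'l set" and lle :: "'l \<Rightarrow> 'l \<Rightarrow> bool"
    and lamP :: "'a ext \<Rightarrow> 'a ext \<Rightarrow> 'l"
    and t n :: nat and bot top :: 'a
  assumes "finite P" and "po_on P le" and "semipure P le" and "poset_length P le = n"
    and "bot \<in> P" and "\<forall>y\<in>P. le bot y" and "top \<in> P" and "\<forall>y\<in>P. le y top"
    and "n \<ge> 1" and "t \<ge> 1"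
    and "po_on L lle"
    and "EL_labeling (hat_set P) (ext_le le) L lle lamP"
  shows "card {c \<in> mchains (plus_set (rees_set P (prank P le) (tset t n) length))
                    (ext_le (rees_le le (prank P le) prefix length)) (El (bot, [])) Top.
                ascent_free (prod_le lle) (labels (ind_lab lamP) c)}
       = (\<Sum>w \<in> {w \<in> NDA n L lle. (n \<ge> 2 \<longrightarrow> \<not> lle (w ! (n - 2)) (w ! (n - 1)))
                                 \<and> chain_count P le lamP w > 0}.
            chain_count P le lamP w * t ^ (asc lle w + 1) * (1 + t) ^ (n - 1 - 2 * asc lle w))"
proof -
  interpret bounded_semipure P le bot top
    using assms by unfold_locales auto
  have "prank P le top = n" using poset_length_eq assms(4) by simp
  then interpret rees_tree_EL P le bot top t n L lle lamP
    using assms by unfold_locales auto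
  show ?thesis using card_ascent_free_chains sum_by_label_words by simp
qed

end
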